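(* In the weighted picking sequence algorithm, for every step $s\in\{0,1,\ldots,m\}$ and all agents $i,j\in N$, $\left|\frac{t_i(s)}{w_i}-\frac{t_j(s)}{w_j}\right|\le\frac{1}{\min(w_i,w_j)}$. Moreover, for every step $s$ and every $i\in N$, $\left|t_i(s)-\frac{w_i}{W}\cdot s\right|\le\frac{w_i}{w_{\min}}$.
   Context: Agents $N=[n]$ with positive weights $w_i$, $W=\sum_iw_i$, $w_{\min}=\min_iw_i$; items $M=[m]$ with additive utilities. Weighted picking sequence algorithm: while items remain, an agent $i^*$ minimizing $t_i/w_i$ (ties broken arbitrarily), where $t_i$ is the number of items $i$ has picked so far, takes her most valued remaining item. Each iteration is a step; $t_i(s)$ is the number of items agent $i$ has picked in steps $1,\ldots,s$ (so $t_i(0)=0$). *)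

theory Defs
  imports Complex_Main
begin

text \<open>Number of items picked by agent i in steps 1..s, where agent pick k picks at step k+1.\<close>
definition picks :: "(nat \<Rightarrow> 'a) \<Rightarrow> 'a \<Rightarrow> nat \<Rightarrow> nat" where
  "picks pick i s = card {k. k < s \<and> pick k = i}"

text \<open>A run of the weighted picking sequence algorithm: at step k+1 (k < card M) agent pick k,
  minimising t_i/w_i over N (ties arbitrary), takes item k, a most valued remaining item.\<close>
definition wps_run :: "'a set \<Rightarrow> ('a \<Rightarrow> real) \<Rightarrow> 'b set \<Rightarrow> ('a \<Rightarrow> 'b \<Rightarrow> real)
    \<Rightarrow> (nat \<Rightarrow> 'a) \<Rightarrow> (nat \<Rightarrow> 'b) \<Rightarrow> bool" where
  "wps_run N w M u pick item \<longleftrightarrow>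
     (\<forall>k < card M.
        pick k \<in> N \<and>
        (\<forall>i\<in>N. real (picks pick (pick k) k) / w (pick k) \<le> real (picks pick i k) / w i) \<and>
        item k \<in> M - item ` {..<k} \<and>
        (\<forall>g \<in> M - item ` {..<k}. u (pick k) g \<le> u (pick k) (item k)))"

end

theory Submission
  imports Defs
begin

text \<open>Only the choice of the picking agent matters. If every turn goes to an agent minimising
  \<open>t\<^sub>i/w\<^sub>i\<close>, then \<open>t\<^sub>i/w\<^sub>i - t\<^sub>j/w\<^sub>j \<le> 1/w\<^sub>i\<close>
  is invariant: the difference grows only when \<open>i\<close> picks, and then
  \<open>t\<^sub>i/w\<^sub>i \<le> t\<^sub>j/w\<^sub>j\<close> just before. The second bound follows by
  averaging, since \<open>t\<^sub>i W - w\<^sub>i s\<close> is the sum over \<open>j\<close> of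
  \<open>w\<^sub>i w\<^sub>j (t\<^sub>i/w\<^sub>i - t\<^sub>j/w\<^sub>j)\<close>.\<close>

definition min_ratio_turns :: "'a set \<Rightarrow> ('a \<Rightarrow> real) \<Rightarrow> (nat \<Rightarrow> 'a) \<Rightarrow> nat \<Rightarrow> bool" where
  "min_ratio_turns N w pick n \<longleftrightarrow>
     (\<forall>k < n. pick k \<in> N \<and>
        (\<forall>i\<in>N. real (picks pick (pick k) k) / w (pick k) \<le> real (picks pick i k) / w i))"

lemma wps_run_imp_min_ratio_turns:
  "wps_run N w M u pick item \<Longrightarrow> min_ratio_turns N w pick (card M)"
  unfolding wps_run_def min_ratio_turns_def by blast

lemma picks_0 [simp]: "picks pick i 0 = 0"
  by (simp add: picks_def)

lemma picks_Suc: "picks pick i (Suc k) = picks pick i k + (if pick k = i then 1 else 0)"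
proof -
  have "{l. l < Suc k \<and> pick l = i} = {l. l < k \<and> pick l = i} \<union> (if pick k = i then {k} else {})"
    by (auto simp: less_Suc_eq)
  then show ?thesis
    by (simp add: picks_def card_insert_if)
qed

lemma sum_picks:
  assumes "finite N" and "\<And>k. k < s \<Longrightarrow> pick k \<in> N"
  shows "(\<Sum>j\<in>N. picks pick j s) = s"
  using assms(2)
proof (induction s)
  case (Suc k)
  then have "pick k \<in> N" by simp
  with Suc \<open>finite N\<close> show ?case
    by (simp add: picks_Suc sum.distrib)
qed simp

lemma min_ratio_turns_ratio_gap:
  assumes turns: "min_ratio_turns N w pick n" and pos: "\<And>j. j \<in> N \<Longrightarrow> w j > 0"
    and "s \<le> n" and i: "i \<in> N" and j: "j \<in> N"
  shows "real (picks pick i s) / w i - real (picks pick j s) / w j \<le> 1 / w i"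
  using \<open>s \<le> n\<close>
proof (induction s)
  case 0
  show ?case using pos[OF i] by simp
next
  case (Suc k)
  let ?r = "\<lambda>l m. real (picks pick l m) / w l"
  have IH: "?r i k - ?r j k \<le> 1 / w i" using Suc by simp
  have min_i: "pick k = i \<Longrightarrow> ?r i k \<le> ?r j k"
    using turns Suc.prems j unfolding min_ratio_turns_def by auto
  have step_picker: "?r (pick k) (Suc k) = ?r (pick k) k + 1 / w (pick k)"
    by (simp add: picks_Suc add_divide_distrib)
  have step_other: "?r l (Suc k) = ?r l k" if "pick k \<noteq> l" for l
    using that by (simp add: picks_Suc)
  have step_mono: "?r j k \<le> ?r j (Suc k)"
    using pos[OF j] by (simp add: picks_Suc divide_right_mono)
  consider "i = j" | "i \<noteq> j" "pick k = i" | "pick k \<noteq> i" by blast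
  then show ?case
  proof cases
    case 1
    then show ?thesis using pos[OF i] by simp
  next
    case 2
    then have "?r i (Suc k) = ?r i k + 1 / w i"
      using step_picker by simp
    moreover have "?r j (Suc k) = ?r j k"
      using 2 by (intro step_other) simp
    ultimately show ?thesis using 2 min_i by linarith
  next
    case 3
    then have "?r i (Suc k) = ?r i k"
      by (intro step_other)
    with IH step_mono show ?thesis by linarith
  qed
qed

lemma min_ratio_turns_ratio_dist:
  assumes "min_ratio_turns N w pick n" and "\<And>j. j \<in> N \<Longrightarrow> w j > 0"
    and "s \<le> n" and i: "i \<in> N" and j: "j \<in> N"
  shows "\<bar>real (picks pick i s) / w i - real (picks pick j s) / w j\<bar> \<le> 1 / min (w i) (w j)"
proof -
  have "1 / w i \<le> 1 / min (w i) (w j)" "1 / w j \<le> 1 / min (w i) (w j)"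
    using assms(2)[OF i] assms(2)[OF j] by (auto simp: frac_le min_def)
  then show ?thesis
    using min_ratio_turns_ratio_gap[OF assms(1-3) i j] min_ratio_turns_ratio_gap[OF assms(1-3) j i]
    by linarith
qed

lemma weighted_share_deviation:
  fixes t w :: "'a \<Rightarrow> real"
  assumes "finite N" and i: "i \<in> N" and pos: "\<And>j. j \<in> N \<Longrightarrow> w j > 0"
    and dist: "\<And>j. j \<in> N \<Longrightarrow> \<bar>t i / w i - t j / w j\<bar> \<le> c"
  shows "\<bar>t i - w i / (\<Sum>j\<in>N. w j) * (\<Sum>j\<in>N. t j)\<bar> \<le> w i * c"
proof -
  define W where "W = (\<Sum>j\<in>N. w j)"
  have "W > 0"
    unfolding W_def using assms by (intro sum_pos) auto
  have "w i * w j * (t i / w i - t j / w j) = t i * w j - w i * t j" if "j \<in> N" for j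
    using pos[OF i] pos[OF that] by (simp add: field_simps)
  then have "t i * W - w i * (\<Sum>j\<in>N. t j) = (\<Sum>j\<in>N. w i * w j * (t i / w i - t j / w j))"
    unfolding W_def by (simp add: sum_distrib_left sum_subtractf)
  also have "\<bar>\<dots>\<bar> \<le> (\<Sum>j\<in>N. w i * w j * c)"
  proof (rule order_trans[OF sum_abs sum_mono])
    fix j assume "j \<in> N"
    then show "\<bar>w i * w j * (t i / w i - t j / w j)\<bar> \<le> w i * w j * c"
      using pos[OF i] pos[of j] dist[of j] by (simp add: abs_mult)
  qed
  also have "\<dots> = w i * c * W"
    unfolding W_def by (simp add: sum_distrib_left sum_distrib_right algebra_simps)
  finally have "\<bar>t i * W - w i * (\<Sum>j\<in>N. t j)\<bar> / W \<le> w i * c"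
    using \<open>W > 0\<close> by (simp add: divide_le_eq)
  moreover have "t i - w i / W * (\<Sum>j\<in>N. t j) = (t i * W - w i * (\<Sum>j\<in>N. t j)) / W"
    using \<open>W > 0\<close> by (simp add: field_simps)
  ultimately show ?thesis
    using \<open>W > 0\<close> unfolding W_def by simp
qed

lemma one_div_min_le_one_div_Min:
  fixes w :: "'a \<Rightarrow> real"
  assumes "finite N" and "\<And>j. j \<in> N \<Longrightarrow> w j > 0" and "i \<in> N" and "j \<in> N"
  shows "1 / min (w i) (w j) \<le> 1 / Min (w ` N)"
proof -
  have "Min (w ` N) > 0"
    using assms by (subst Min_gr_iff) auto
  moreover have "Min (w ` N) \<le> min (w i) (w j)"
    using assms by auto
  ultimately show ?thesis
    by (simp add: frac_le)
qed

theorem lemma8: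
  fixes N :: "'a set" and M :: "'b set" and w :: "'a \<Rightarrow> real"
    and u :: "'a \<Rightarrow> 'b \<Rightarrow> real" and pick :: "nat \<Rightarrow> 'a" and item :: "nat \<Rightarrow> 'b"
  assumes "finite N" and "N \<noteq> {}" and "\<And>i. i \<in> N \<Longrightarrow> w i > 0"
    and "finite M"
    and "wps_run N w M u pick item"
  shows "(\<forall>s \<le> card M. \<forall>i\<in>N. \<forall>j\<in>N.
            \<bar>real (picks pick i s) / w i - real (picks pick j s) / w j\<bar> \<le> 1 / min (w i) (w j))
       \<and> (\<forall>s \<le> card M. \<forall>i\<in>N.
            \<bar>real (picks pick i s) - w i / (\<Sum>j\<in>N. w j) * real s\<bar> \<le> w i / Min (w ` N))"
proof -
  have turns: "min_ratio_turns N w pick (card M)"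
    using assms(5) by (rule wps_run_imp_min_ratio_turns)
  have dist: "\<bar>real (picks pick i s) / w i - real (picks pick j s) / w j\<bar> \<le> 1 / min (w i) (w j)"
    if "s \<le> card M" and "i \<in> N" and "j \<in> N" for s i j
    using min_ratio_turns_ratio_dist[OF turns] assms(3) that by blast
  have "\<bar>real (picks pick i s) - w i / (\<Sum>j\<in>N. w j) * real s\<bar> \<le> w i / Min (w ` N)"
    if "s \<le> card M" and "i \<in> N" for s i
  proof -
    have "(\<Sum>j\<in>N. real (picks pick j s)) = real s"
      using sum_picks[OF assms(1)] turns \<open>s \<le> card M\<close> unfolding min_ratio_turns_def
      by (metis of_nat_sum order_less_le_trans)
    moreover have "\<bar>real (picks pick i s) / w i - real (picks pick j s) / w j\<bar> \<le> 1 / Min (w ` N)"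
      if "j \<in> N" for j
      using dist[OF \<open>s \<le> card M\<close> \<open>i \<in> N\<close> that]
        one_div_min_le_one_div_Min[where w = w, OF assms(1,3) \<open>i \<in> N\<close> that] by linarith
    ultimately show ?thesis
      using weighted_share_deviation[OF assms(1) \<open>i \<in> N\<close> assms(3)] by fastforce
  qed
  with dist show ?thesis by blast
qed

end
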